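(* Let $G$ be a graph that contains no induced $C_5$, no induced bull, and no induced anchor. Then $G$ is pure. Moreover, every shortest odd hole in $G$ is clean.
   Context: All graphs are finite and simple. The bull is the graph consisting of a triangle with two disjoint pendant edges. An anchor is a six-vertex graph consisting of a 4-vertex induced path $P$, a vertex $c$ adjacent to all vertices of $P$, and a vertex $a$ adjacent to no vertex of $P$ (with $a,c$ either adjacent or not). A hole is an induced subgraph isomorphic to a cycle $C_k$ with $k\ge4$; it is odd if $k$ is odd. A shortest odd hole of $G$ is an odd hole of minimum length. A hole $C$ in $G$ is clean if for every $v\in V(G)\setminus V(C)$, the set of neighbours of $v$ in $V(C)$ is contained in the vertex set of some two-edge path of $C$. $G$ is pure if either $G$ contains no odd hole, or $G$ contains a shortest odd hole that is clean. *)

theory Defs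
  imports Main
begin

definition graph :: "'a set \<Rightarrow> ('a \<Rightarrow> 'a \<Rightarrow> bool) \<Rightarrow> bool" where
  "graph V E \<longleftrightarrow> finite V \<and> (\<forall>x y. E x y \<longrightarrow> E y x) \<and> (\<forall>x. \<not> E x x)
      \<and> (\<forall>x y. E x y \<longrightarrow> x \<in> V \<and> y \<in> V)"

definition contains_induced ::
  "'a set \<Rightarrow> ('a \<Rightarrow> 'a \<Rightarrow> bool) \<Rightarrow> 'b set \<Rightarrow> ('b \<Rightarrow> 'b \<Rightarrow> bool) \<Rightarrow> bool" where
  "contains_induced V E HV HE \<longleftrightarrow>
     (\<exists>f. inj_on f HV \<and> f ` HV \<subseteq> V \<and> (\<forall>x\<in>HV. \<forall>y\<in>HV. HE x y \<longleftrightarrow> E (f x) (f y)))"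

definition sym_edges :: "(nat \<times> nat) set \<Rightarrow> nat \<Rightarrow> nat \<Rightarrow> bool" where
  "sym_edges S x y \<longleftrightarrow> (x, y) \<in> S \<or> (y, x) \<in> S"

definition C5_V :: "nat set" where "C5_V = {0..<5}"
definition C5_E :: "nat \<Rightarrow> nat \<Rightarrow> bool" where
  "C5_E = sym_edges {(0,1),(1,2),(2,3),(3,4),(4,0)}"

definition bull_V :: "nat set" where "bull_V = {0..<5}"
definition bull_E :: "nat \<Rightarrow> nat \<Rightarrow> bool" where
  "bull_E = sym_edges {(0,1),(1,2),(2,0),(3,0),(4,1)}"

text \<open>Anchors: induced path 0-1-2-3, vertex c = 4 complete to the path,
vertex a = 5 anticomplete to the path; a,c adjacent iff the flag ac holds.\<close>
definition anchor_V :: "nat set" where "anchor_V = {0..<6}"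
definition anchor_E :: "bool \<Rightarrow> nat \<Rightarrow> nat \<Rightarrow> bool" where
  "anchor_E ac = sym_edges ({(0,1),(1,2),(2,3),(4,0),(4,1),(4,2),(4,3)} \<union> (if ac then {(5,4)} else {}))"

definition is_hole :: "'a set \<Rightarrow> ('a \<Rightarrow> 'a \<Rightarrow> bool) \<Rightarrow> 'a list \<Rightarrow> bool" where
  "is_hole V E cs \<longleftrightarrow> distinct cs \<and> length cs \<ge> 4 \<and> set cs \<subseteq> V \<and>
     (\<forall>i < length cs. \<forall>j < length cs.
        E (cs ! i) (cs ! j) \<longleftrightarrow> (j = Suc i mod length cs \<or> i = Suc j mod length cs))"

definition is_odd_hole :: "'a set \<Rightarrow> ('a \<Rightarrow> 'a \<Rightarrow> bool) \<Rightarrow> 'a list \<Rightarrow> bool" where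
  "is_odd_hole V E cs \<longleftrightarrow> is_hole V E cs \<and> odd (length cs)"

definition shortest_odd_hole :: "'a set \<Rightarrow> ('a \<Rightarrow> 'a \<Rightarrow> bool) \<Rightarrow> 'a list \<Rightarrow> bool" where
  "shortest_odd_hole V E cs \<longleftrightarrow> is_odd_hole V E cs \<and>
     (\<forall>ds. is_odd_hole V E ds \<longrightarrow> length cs \<le> length ds)"

definition clean :: "'a set \<Rightarrow> ('a \<Rightarrow> 'a \<Rightarrow> bool) \<Rightarrow> 'a list \<Rightarrow> bool" where
  "clean V E cs \<longleftrightarrow> (\<forall>v \<in> V - set cs. \<exists>i < length cs.
     {u \<in> set cs. E v u} \<subseteq>
       {cs ! i, cs ! (Suc i mod length cs), cs ! (Suc (Suc i) mod length cs)})"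

definition pure :: "'a set \<Rightarrow> ('a \<Rightarrow> 'a \<Rightarrow> bool) \<Rightarrow> bool" where
  "pure V E \<longleftrightarrow> (\<not> (\<exists>cs. is_odd_hole V E cs)) \<or>
     (\<exists>cs. shortest_odd_hole V E cs \<and> clean V E cs)"

end

theory Submission
  imports Defs
begin

text \<open>Let \<open>C\<close> be a shortest odd hole, of length \<open>k \<ge> 7\<close> since there is no \<open>C\<^sub>5\<close>, and \<open>v\<close> a vertex
off \<open>C\<close>. Going around \<open>C\<close>, the neighbours of \<open>v\<close> form runs separated by gaps. A run of four
yields an anchor and a run of exactly two a bull, so every run has length 1 or 3. A gap of even
length \<open>l\<close> closes, together with \<open>v\<close>, an odd hole of length \<open>l + 3\<close>, which is shorter than \<open>C\<close>
unless \<open>l \<ge> k - 3\<close>, and then all neighbours lie on a two-edge path of \<open>C\<close>. Otherwise all runs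
and gaps are odd, there are as many runs as gaps, and \<open>k\<close> would be even.\<close>

definition run_start :: "(int \<Rightarrow> bool) \<Rightarrow> int \<Rightarrow> bool" where
  "run_start t n \<longleftrightarrow> t n \<and> \<not> t (n - 1)"

lemma int_last_before:
  fixes P :: "int \<Rightarrow> bool"
  assumes "P a" "a < b"
  obtains q where "a \<le> q" "q < b" "P q" "\<forall>j. q < j \<and> j < b \<longrightarrow> \<not> P j"
proof -
  define Q where "Q = {j. a \<le> j \<and> j < b \<and> P j}"
  have "finite Q" "a \<in> Q"
    using assms unfolding Q_def by (auto intro: finite_subset[of _ "{a..<b}"])
  hence max_in: "Max Q \<in> Q" and max_ge: "\<And>j. j \<in> Q \<Longrightarrow> j \<le> Max Q"
    by (auto intro: Max_in)
  have "\<not> P j" if "Max Q < j" "j < b" for j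
  proof
    assume "P j"
    with that max_in have "j \<in> Q" unfolding Q_def by auto
    with max_ge \<open>Max Q < j\<close> show False by fastforce
  qed
  with max_in show thesis using that[of "Max Q"] unfolding Q_def by blast
qed

lemma run_start_between:
  assumes "\<not> t y" "t z" "y < z"
  obtains p where "y < p" "p \<le> z" "run_start t p"
proof -
  obtain q where "y \<le> q" "q < z + 1" "\<not> t q" "\<forall>j. q < j \<and> j < z + 1 \<longrightarrow> t j"
    using int_last_before[of "\<lambda>j. \<not> t j" y "z + 1"] assms by auto
  moreover have "q \<noteq> z" using assms \<open>\<not> t q\<close> by auto
  ultimately show thesis using that[of "q + 1"] unfolding run_start_def by auto
qed

lemma previous_run_start:
  assumes no_four: "\<And>i. \<not> (t i \<and> t (i+1) \<and> t (i+2) \<and> t (i+3))"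
    and no_pair: "\<And>i. \<not> (\<not> t i \<and> t (i+1) \<and> t (i+2) \<and> \<not> t (i+3))"
    and "run_start t p" "p \<le> q" "t q" "\<not> t (q + 1)"
  obtains r where "run_start t r" "p \<le> r" "r \<le> q" "even (q - r)"
proof (cases "t (q - 1)")
  case False
  thus thesis using that[of q] assms(3-5) unfolding run_start_def by auto
next
  case True
  have "t (q - 2)" using no_pair[of "q - 2"] True assms(5,6) by (simp add: algebra_simps)
  moreover have "\<not> t (q - 3)" using no_four[of "q - 3"] True assms(5) \<open>t (q - 2)\<close>
    by (simp add: algebra_simps)
  moreover have "p \<le> q - 2"
    using assms(3,4) True \<open>t (q - 2)\<close> unfolding run_start_def
    by (cases "q = p \<or> q = p + 1") auto
  ultimately show thesis using that[of "q - 2"] by (simp add: run_start_def algebra_simps)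
qed

lemma mod_representative_above:
  fixes k :: int
  assumes "0 < k"
  obtains r where "r mod k = j mod k" "q < r" "r \<le> q + k"
proof
  show "(q + 1 + (j - q - 1) mod k) mod k = j mod k" by (simp add: mod_add_right_eq)
  show "q < q + 1 + (j - q - 1) mod k" "q + 1 + (j - q - 1) mod k \<le> q + k"
    using pos_mod_sign[of k "j - q - 1"] pos_mod_bound[of k "j - q - 1"] assms by linarith+
qed

lemma periodic_gap_window:
  fixes t :: "int \<Rightarrow> bool" and k :: int
  assumes periodic: "\<And>x. t x = t (x mod k)" and "0 < k"
    and gap: "\<forall>j. q < j \<and> j < n \<longrightarrow> \<not> t j" and "q + k \<le> n + 2"
  shows "\<forall>j. t j \<longrightarrow> j mod k \<in> {n mod k, (n+1) mod k, (n+2) mod k}"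
proof (intro allI impI)
  fix j assume "t j"
  obtain r where r_mod: "r mod k = j mod k" and "q < r" "r \<le> q + k"
    using mod_representative_above \<open>0 < k\<close> by blast
  with periodic \<open>t j\<close> have "t r" by metis
  with \<open>q < r\<close> \<open>r \<le> q + k\<close> gap \<open>q + k \<le> n + 2\<close> have "r = n \<or> r = n + 1 \<or> r = n + 2"
    by force
  thus "j mod k \<in> {n mod k, (n+1) mod k, (n+2) mod k}" using r_mod by auto
qed

lemma run_starts_same_parity:
  fixes t :: "int \<Rightarrow> bool" and k :: int
  assumes periodic: "\<And>x. t x = t (x mod k)" and "0 < k"
    and no_four: "\<And>i. \<not> (t i \<and> t (i+1) \<and> t (i+2) \<and> t (i+3))"
    and no_pair: "\<And>i. \<not> (\<not> t i \<and> t (i+1) \<and> t (i+2) \<and> \<not> t (i+3))"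
    and short_gaps_even: "\<And>q n. t q \<Longrightarrow> t n \<Longrightarrow> q + 3 \<le> n \<Longrightarrow> n + 3 \<le> q + k
              \<Longrightarrow> \<forall>j. q < j \<and> j < n \<longrightarrow> \<not> t j \<Longrightarrow> even (n - q)"
    and no_window: "\<not> (\<exists>i. \<forall>j. t j \<longrightarrow> j mod k \<in> {i mod k, (i+1) mod k, (i+2) mod k})"
    and start_p: "run_start t p"
  shows "run_start t n \<Longrightarrow> p \<le> n \<Longrightarrow> even (n - p)"
proof (induction "nat (n - p)" arbitrary: n rule: less_induct)
  case less
  show ?case
  proof (cases "n = p")
    case False
    then obtain q where q: "p \<le> q" "q < n" "t q"
      and gap: "\<forall>j. q < j \<and> j < n \<longrightarrow> \<not> t j"
      using int_last_before[of t p n] start_p less.prems unfolding run_start_def by auto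
    have "q + 2 \<le> n" using q less.prems(1) unfolding run_start_def by (cases "q = n - 1") auto
    moreover have "n + 3 \<le> q + k"
      using periodic_gap_window[OF periodic \<open>0 < k\<close> gap] no_window by force
    ultimately have "even (n - q)"
      using short_gaps_even[OF \<open>t q\<close> _ _ _ gap] less.prems(1) unfolding run_start_def
      by (cases "q + 2 = n") auto
    moreover obtain r where "run_start t r" "p \<le> r" "r \<le> q" "even (q - r)"
        using previous_run_start[OF no_four no_pair start_p q(1,3)] gap q(2) \<open>q + 2 \<le> n\<close>
      by auto
    moreover have "even (r - p)"
      using less.hyps[of r] \<open>run_start t r\<close> \<open>p \<le> r\<close> \<open>r \<le> q\<close> q(2) less.prems by auto
    ultimately show ?thesis by presburger
  qed simp
qed

lemma cyclic_pattern_in_window: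
  fixes t :: "int \<Rightarrow> bool" and k :: int
  assumes periodic: "\<And>x. t x = t (x mod k)" and "odd k" "0 < k"
    and no_four: "\<And>i. \<not> (t i \<and> t (i+1) \<and> t (i+2) \<and> t (i+3))"
    and no_pair: "\<And>i. \<not> (\<not> t i \<and> t (i+1) \<and> t (i+2) \<and> \<not> t (i+3))"
    and short_gaps_even: "\<And>q n. t q \<Longrightarrow> t n \<Longrightarrow> q + 3 \<le> n \<Longrightarrow> n + 3 \<le> q + k
              \<Longrightarrow> \<forall>j. q < j \<and> j < n \<longrightarrow> \<not> t j \<Longrightarrow> even (n - q)"
  shows "\<exists>i. \<forall>j. t j \<longrightarrow> j mod k \<in> {i mod k, (i+1) mod k, (i+2) mod k}"
proof (rule ccontr)
  assume no_window: "\<not> ?thesis"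
  have shift: "t (x + k) = t x" for x using periodic by (metis mod_add_self2)
  obtain y where "\<not> t y" using no_four by blast
  obtain z where "t z" using no_window by blast
  obtain z' where "z' mod k = z mod k" "y < z'" using mod_representative_above \<open>0 < k\<close> by blast
  with periodic \<open>t z\<close> have "t z'" by metis
  then obtain p where "run_start t p"
    using run_start_between[of t y z'] \<open>\<not> t y\<close> \<open>y < z'\<close> by blast
  moreover from this shift have "run_start t (p + k)"
    unfolding run_start_def by (metis add_diff_eq diff_add_eq)
  ultimately have "even k"
    using run_starts_same_parity[OF periodic \<open>0 < k\<close> no_four no_pair short_gaps_even no_window]
      \<open>0 < k\<close> by fastforce
  with \<open>odd k\<close> show False ..
qed

locale graph_hole =
  fixes V :: "'a set" and E :: "'a \<Rightarrow> 'a \<Rightarrow> bool" and cs :: "'a list"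
  assumes graph: "graph V E" and hole: "is_hole V E cs"
begin

definition K :: int where "K = int (length cs)"

definition c :: "int \<Rightarrow> 'a" where "c x = cs ! nat (x mod K)"

lemma K_ge_4: "K \<ge> 4" using hole unfolding is_hole_def K_def by auto

lemma E_sym: "E x y \<longleftrightarrow> E y x" using graph unfolding graph_def by blast

lemma E_irrefl: "\<not> E x x" using graph unfolding graph_def by blast

lemma distinct_cs: "distinct cs" using hole unfolding is_hole_def by blast

lemma nat_mod_K_less: "nat (x mod K) < length cs"
proof -
  have "0 \<le> x mod K" "x mod K < K" using K_ge_4 by auto
  thus ?thesis unfolding K_def by (simp add: nat_less_iff)
qed

lemma c_in_set: "c x \<in> set cs" unfolding c_def using nat_mod_K_less by simp

lemma c_in_V: "c x \<in> V" using c_in_set hole unfolding is_hole_def by auto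

lemma c_mod: "c (x mod K) = c x" unfolding c_def by simp

lemma c_of_nat: "m < length cs \<Longrightarrow> c (int m) = cs ! m"
  unfolding c_def K_def by (simp add: zmod_int)

lemma c_add_of_nat: "c (x + int d) = cs ! ((nat (x mod K) + d) mod length cs)"
proof -
  have "int ((nat (x mod K) + d) mod length cs) = (int (nat (x mod K)) + int d) mod K"
    unfolding K_def by (simp add: of_nat_mod)
  also have "\<dots> = (x mod K + int d) mod K" using K_ge_4 by simp
  also have "\<dots> = (x + int d) mod K" by (simp add: mod_add_left_eq)
  finally show ?thesis unfolding c_def by (metis nat_int)
qed

lemma c_eq_iff: "c x = c y \<longleftrightarrow> x mod K = y mod K"
proof -
  have "c x = c y \<longleftrightarrow> nat (x mod K) = nat (y mod K)"
    unfolding c_def using nat_mod_K_less nth_eq_iff_index_eq[OF distinct_cs] by blast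
  also have "\<dots> \<longleftrightarrow> x mod K = y mod K" using K_ge_4 by (simp add: eq_nat_nat_iff)
  finally show ?thesis .
qed

lemma c_inj: "c x = c y \<Longrightarrow> \<bar>x - y\<bar> < K \<Longrightarrow> x = y"
proof -
  assume "c x = c y" "\<bar>x - y\<bar> < K"
  then obtain m where m: "x - y = K * m"
    unfolding c_eq_iff by (auto simp: mod_eq_dvd_iff elim: dvdE)
  have "m = 0"
  proof (rule ccontr)
    assume "m \<noteq> 0"
    hence "K \<le> \<bar>K * m\<bar>" using K_ge_4 by (simp add: abs_mult)
    with m \<open>\<bar>x - y\<bar> < K\<close> show False by simp
  qed
  with m show "x = y" by simp
qed

lemma c_adj_iff_succ: "E (c x) (c y) \<longleftrightarrow> c y = c (x + 1) \<or> c x = c (y + 1)"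
proof -
  let ?Suc = "\<lambda>z. Suc (nat (z mod K)) mod length cs"
  have succ: "c (z + 1) = cs ! ?Suc z" for z using c_add_of_nat[of z 1] by simp
  have Suc_less: "?Suc z < length cs" for z
    using K_ge_4 unfolding K_def by (intro mod_less_divisor) linarith
  have idx: "nat (z mod K) = ?Suc w \<longleftrightarrow> c z = c (w + 1)" for z w
    unfolding succ unfolding c_def using nth_eq_iff_index_eq[OF distinct_cs nat_mod_K_less Suc_less]
    by simp
  have "E (c x) (c y) \<longleftrightarrow> nat (y mod K) = ?Suc x \<or> nat (x mod K) = ?Suc y"
    using hole nat_mod_K_less unfolding is_hole_def c_def by blast
  thus ?thesis unfolding idx .
qed

lemma c_adj:
  assumes "\<bar>y - x\<bar> \<le> K - 2"
  shows "E (c x) (c y) \<longleftrightarrow> y = x + 1 \<or> x = y + 1"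
proof -
  have "c y = c (x + 1) \<longleftrightarrow> y = x + 1" "c x = c (y + 1) \<longleftrightarrow> x = y + 1"
    using c_inj[of y "x + 1"] c_inj[of x "y + 1"] assms by auto
  thus ?thesis unfolding c_adj_iff_succ by simp
qed

lemma not_in_hole_ne_c: "v \<notin> set cs \<Longrightarrow> v \<noteq> c x"
  using c_in_set by metis

lemma anchor_if_four_consecutive_neighbours:
  assumes "K \<ge> 7" and v: "v \<in> V" "v \<notin> set cs"
    and "E v (c i)" "E v (c (i+1))" "E v (c (i+2))" "E v (c (i+3))"
  shows "contains_induced V E anchor_V (anchor_E (E v (c (i+5))))"
proof -
  \<comment> \<open>the anchor's vertex \<open>a\<close> is \<open>c (i+5)\<close>, which \<open>K \<ge> 7\<close> keeps away from \<open>c i, \<dots>, c (i+3)\<close>\<close>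
  define f where "f x = (if x = 4 then v else c (i + int x))" for x :: nat
  have vertices: "anchor_V = {0,1,2,3,4,5}" unfolding anchor_V_def by auto
  have "inj_on f anchor_V"
  proof (rule inj_onI)
    fix x y assume xy: "x \<in> anchor_V" "y \<in> anchor_V" "f x = f y"
    show "x = y"
    proof (cases "x = 4 \<or> y = 4")
      case True
      thus ?thesis using xy not_in_hole_ne_c[OF v(2)] unfolding f_def by (auto split: if_splits)
    next
      case False
      hence "c (i + int x) = c (i + int y)" using xy unfolding f_def by simp
      moreover have "\<bar>(i + int x) - (i + int y)\<bar> < K"
        using xy \<open>K \<ge> 7\<close> unfolding anchor_V_def by auto
      ultimately show ?thesis using c_inj by fastforce
    qed
  qed
  moreover have "f ` anchor_V \<subseteq> V" using v c_in_V unfolding f_def by auto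
  moreover have "\<forall>x\<in>anchor_V. \<forall>y\<in>anchor_V. anchor_E (E v (c (i+5))) x y \<longleftrightarrow> E (f x) (f y)"
    unfolding vertices using assms E_sym[of _ v]
    by (simp add: f_def anchor_E_def sym_edges_def c_adj E_irrefl)
  ultimately show ?thesis unfolding contains_induced_def by blast
qed

lemma bull_if_two_consecutive_neighbours:
  assumes "K \<ge> 7" and v: "v \<in> V" "v \<notin> set cs"
    and "\<not> E v (c i)" "E v (c (i+1))" "E v (c (i+2))" "\<not> E v (c (i+3))"
  shows "contains_induced V E bull_V bull_E"
proof -
  define f where "f x = (if x = 2 then v else if x = 0 then c (i+1) else if x = 1 then c (i+2)
     else if x = 3 then c i else c (i+3))" for x :: nat
  have vertices: "bull_V = {0,1,2,3,4}" unfolding bull_V_def by auto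
  have v_ne: "v \<noteq> c x" "c x \<noteq> v" for x using not_in_hole_ne_c[OF v(2)] by auto
  have c_shift_eq: "\<bar>a - b\<bar> < K \<Longrightarrow> c (i + a) = c (i + b) \<longleftrightarrow> a = b" for a b
    using c_inj by fastforce
  have c_base_eq:
    "\<bar>b\<bar> < K \<Longrightarrow> c i = c (i + b) \<longleftrightarrow> b = 0" "\<bar>b\<bar> < K \<Longrightarrow> c (i + b) = c i \<longleftrightarrow> b = 0" for b using c_shift_eq[of 0 b] c_shift_eq[of b 0] by auto
  have "inj_on f bull_V"
    unfolding vertices inj_on_def using \<open>K \<ge> 7\<close> by (simp add: f_def v_ne c_shift_eq c_base_eq)
  moreover have "f ` bull_V \<subseteq> V" using v c_in_V unfolding f_def by auto
  moreover have "\<forall>x\<in>bull_V. \<forall>y\<in>bull_V. bull_E x y \<longleftrightarrow> E (f x) (f y)"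
    unfolding vertices using assms E_sym[of _ v]
    by (simp add: f_def bull_E_def sym_edges_def c_adj E_irrefl)
  ultimately show ?thesis unfolding contains_induced_def by blast
qed

lemma C5_if_length_5:
  assumes "length cs = 5"
  shows "contains_induced V E C5_V C5_E"
proof -
  have vertices: "C5_V = {0,1,2,3,4}" unfolding C5_V_def by auto
  have "inj_on (\<lambda>x. cs ! x) C5_V"
    unfolding C5_V_def inj_on_def using distinct_cs assms by (simp add: nth_eq_iff_index_eq)
  moreover have "(\<lambda>x. cs ! x) ` C5_V \<subseteq> V" using hole assms unfolding is_hole_def C5_V_def by auto
  moreover have "\<forall>x<5. \<forall>y<5. E (cs ! x) (cs ! y) \<longleftrightarrow> (y = Suc x mod 5 \<or> x = Suc y mod 5)"
    using hole assms unfolding is_hole_def by simp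
  moreover have "\<forall>x\<in>C5_V. \<forall>y\<in>C5_V. C5_E x y \<longleftrightarrow> (y = Suc x mod 5 \<or> x = Suc y mod 5)"
    unfolding vertices by (simp add: C5_E_def sym_edges_def)
  ultimately show ?thesis unfolding contains_induced_def C5_V_def by auto
qed

lemma hole_through_gap:
  assumes v: "v \<in> V" "v \<notin> set cs"
    and ends: "E v (c q)" "E v (c n)" and gap: "\<forall>j. q < j \<and> j < n \<longrightarrow> \<not> E v (c j)"
    and "q + 2 \<le> n" "n + 2 \<le> q + K"
  shows "is_hole V E (v # map (\<lambda>j. c (q + int j)) [0..<nat (n - q) + 1])"
proof -
  define m where "m = nat (n - q)"
  define ds where "ds = v # map (\<lambda>j. c (q + int j)) [0..<m + 1]"
  have m: "int m = n - q" "2 \<le> m" "int m + 2 \<le> K" using assms(6,7) unfolding m_def by auto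
  have v_ne: "v \<noteq> c x" for x using not_in_hole_ne_c[OF v(2)] by auto
  have path_inj: "inj_on (\<lambda>j. c (q + int j)) {0..<m + 1}"
  proof (rule inj_onI)
    fix a b assume "a \<in> {0..<m + 1}" "b \<in> {0..<m + 1}" "c (q + int a) = c (q + int b)"
    with m have "q + int a = q + int b" by (intro c_inj) auto
    thus "a = b" by simp
  qed
  have nth_0: "ds ! 0 = v" unfolding ds_def by simp
  have nth_Suc: "a < m + 1 \<Longrightarrow> ds ! Suc a = c (q + int a)" for a
    unfolding ds_def by (simp del: upt_Suc)
  have v_adj: "b < m + 1 \<Longrightarrow> E v (c (q + int b)) \<longleftrightarrow> b = 0 \<or> b = m" for b
    using ends gap m(1) by (cases "b = 0 \<or> b = m") auto
  have path_adj: "a < m + 1 \<Longrightarrow> b < m + 1 \<Longrightarrow>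
      E (c (q + int a)) (c (q + int b)) \<longleftrightarrow> b = a + 1 \<or> a = b + 1" for a b using m by (subst c_adj) auto
  have adj: "E (ds ! a) (ds ! b) \<longleftrightarrow> b = Suc a mod (m + 2) \<or> a = Suc b mod (m + 2)"
    if "a < m + 2" "b < m + 2" for a b
    using that
    by (cases a; cases b) (auto simp: nth_0 nth_Suc v_adj path_adj E_irrefl E_sym[of _ v] mod_Suc)
  have "distinct ds"
    using path_inj v_ne unfolding ds_def by (auto simp: distinct_map simp del: upt_Suc)
  moreover have "set ds \<subseteq> V" using v c_in_V unfolding ds_def by auto
  moreover have "length ds = m + 2" unfolding ds_def by simp
  ultimately have "is_hole V E ds" unfolding is_hole_def using adj m(2) by auto
  thus ?thesis unfolding ds_def m_def .
qed

lemma neighbours_within_two_edge_path: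
  assumes shortest: "shortest_odd_hole V E cs"
    and no_C5: "\<not> contains_induced V E C5_V C5_E"
    and no_bull: "\<not> contains_induced V E bull_V bull_E"
    and no_anchor: "\<forall>ac. \<not> contains_induced V E anchor_V (anchor_E ac)"
    and v: "v \<in> V" "v \<notin> set cs"
  shows "\<exists>i < length cs. {u \<in> set cs. E v u} \<subseteq>
           {cs ! i, cs ! (Suc i mod length cs), cs ! (Suc (Suc i) mod length cs)}"
proof -
  have "odd K" using shortest unfolding shortest_odd_hole_def is_odd_hole_def K_def by simp
  moreover have "K \<noteq> 5" using C5_if_length_5 no_C5 unfolding K_def by auto
  ultimately have "K \<ge> 7" using K_ge_4 by presburger
  define t where "t x = E v (c x)" for x
  have "\<exists>i. \<forall>j. t j \<longrightarrow> j mod K \<in> {i mod K, (i+1) mod K, (i+2) mod K}"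
  proof (rule cyclic_pattern_in_window)
    show "t x = t (x mod K)" for x unfolding t_def c_mod ..
    show "odd K" "0 < K" using \<open>odd K\<close> K_ge_4 by auto
    show "\<not> (t i \<and> t (i+1) \<and> t (i+2) \<and> t (i+3))" for i
      unfolding t_def using anchor_if_four_consecutive_neighbours[OF \<open>K \<ge> 7\<close> v] no_anchor by blast
    show "\<not> (\<not> t i \<and> t (i+1) \<and> t (i+2) \<and> \<not> t (i+3))" for i
      unfolding t_def using bull_if_two_consecutive_neighbours[OF \<open>K \<ge> 7\<close> v] no_bull by blast
    show "even (n - q)"
      if "t q" "t n" "q + 3 \<le> n" "n + 3 \<le> q + K" "\<forall>j. q < j \<and> j < n \<longrightarrow> \<not> t j" for q n
    proof (rule ccontr)
      assume "odd (n - q)"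
      let ?ds = "v # map (\<lambda>j. c (q + int j)) [0..<nat (n - q) + 1]"
      have "is_hole V E ?ds" using hole_through_gap[OF v] that unfolding t_def by simp
      moreover have "odd (length ?ds)" using \<open>odd (n - q)\<close> \<open>q + 3 \<le> n\<close> by (simp add: even_nat_iff)
      ultimately have "length cs \<le> length ?ds"
        using shortest unfolding shortest_odd_hole_def is_odd_hole_def by blast
      with \<open>n + 3 \<le> q + K\<close> \<open>q + 3 \<le> n\<close> show False unfolding K_def by simp
    qed
  qed
  then obtain i where window: "\<forall>j. t j \<longrightarrow> j mod K \<in> {i mod K, (i+1) mod K, (i+2) mod K}" ..
  have "{u \<in> set cs. E v u} \<subseteq> {c i, c (i + 1), c (i + 2)}"
  proof
    fix u assume "u \<in> {u \<in> set cs. E v u}"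
    then obtain m where "m < length cs" "u = c (int m)" "t (int m)"
      unfolding t_def by (auto simp: in_set_conv_nth c_of_nat)
    with window have "int m mod K \<in> {i mod K, (i+1) mod K, (i+2) mod K}" by blast
    thus "u \<in> {c i, c (i + 1), c (i + 2)}" unfolding \<open>u = c (int m)\<close> by (auto simp: c_eq_iff)
  qed
  moreover have "{c i, c (i + 1), c (i + 2)} = {cs ! nat (i mod K),
      cs ! (Suc (nat (i mod K)) mod length cs), cs ! (Suc (Suc (nat (i mod K))) mod length cs)}"
    using c_add_of_nat[of i 0] c_add_of_nat[of i 1] c_add_of_nat[of i 2] nat_mod_K_less by simp
  ultimately show ?thesis using nat_mod_K_less by auto
qed

end

lemma shortest_odd_hole_clean:
  assumes "graph V E"
    and "\<not> contains_induced V E C5_V C5_E"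
    and "\<not> contains_induced V E bull_V bull_E"
    and "\<forall>ac. \<not> contains_induced V E anchor_V (anchor_E ac)"
    and shortest: "shortest_odd_hole V E cs"
  shows "clean V E cs"
proof -
  interpret graph_hole V E cs
    using assms(1) shortest unfolding shortest_odd_hole_def is_odd_hole_def by unfold_locales auto
  show ?thesis
    unfolding clean_def using neighbours_within_two_edge_path[OF shortest assms(2-4)] by blast
qed

lemma shortest_odd_hole_exists: "is_odd_hole V E cs \<Longrightarrow> \<exists>ds. shortest_odd_hole V E ds"
  using ex_has_least_nat[of "is_odd_hole V E" cs length] unfolding shortest_odd_hole_def by blast

theorem theorem2p1:
  fixes V :: "'a set" and E :: "'a \<Rightarrow> 'a \<Rightarrow> bool"
  assumes "graph V E"
    and "\<not> contains_induced V E C5_V C5_E"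
    and "\<not> contains_induced V E bull_V bull_E"
    and "\<forall>ac. \<not> contains_induced V E anchor_V (anchor_E ac)"
  shows "pure V E \<and> (\<forall>cs. shortest_odd_hole V E cs \<longrightarrow> clean V E cs)"
proof -
  have clean: "\<forall>cs. shortest_odd_hole V E cs \<longrightarrow> clean V E cs"
    using shortest_odd_hole_clean[OF assms] by blast
  moreover from clean have "pure V E"
    using shortest_odd_hole_exists unfolding pure_def by blast
  ultimately show ?thesis by blast
qed

end
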